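(* Consider the network model with social-oblivious mobility and interest-based routing IB$(\gamma)$ described in the context, with $\gamma=\frac{0.29}{m-1}$, and let $T^{so}_{IB(\gamma)}$ be the time at which the message is first delivered to $D$. Then $\mathbb{E}[T^{so}_{IB(\gamma)}]=\frac{1}{2\lambda}(1+o(1))$ as $n\to\infty$.
   Context: Network: fix an integer $m\ge 2$ independent of $n$. There are $n+2$ nodes: a source $S$, a destination $D$ and relays $R_1,\dots,R_n$. Each node $X$ has an interest profile, a unit vector in the closed positive orthant of the unit sphere of $\mathbb{R}^m$; $\cos\angle(X,Y)=\langle X,Y\rangle$. $S=(1,0,\dots,0)$, $D=(0,1,0,\dots,0)$. Relay profiles are i.i.d.: $\angle(S,R_i)$ is uniform on $[0,\pi/2]$, and given this angle $R_i$ is uniform among unit vectors of the positive orthant making that angle with $S$. Profiles are fixed in time. For each unordered pair $\{A,B\}$ the meeting instants form a Poisson process of rate $\lambda_{AB}$, independently over pairs, from time $0$. Social-oblivious mobility: $\lambda_{AB}=\lambda$ for all pairs, a fixed constant $\lambda>0$. IB$(\gamma)$ routing: $S$ holds two copies and always keeps one. If $S$ meets $D$ before handing over the second copy, the message is delivered then. Otherwise the second copy is given to the first relay $R$ met by $S$ with $\cos\angle(R,D)\ge\gamma$; if no such relay has been met by time $n$, it is given to the first relay met by $S$ after time $n$. Afterwards no further copies are created or transferred, and the message is delivered when the first of $S$ and that relay meets $D$. Expectations are over the profiles and the meeting processes. *)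

theory Defs
  imports "HOL-Probability.Probability"
begin

datatype node = Src | Dst | Rel nat

definition nodes :: "nat \<Rightarrow> node set" where
  "nodes n = {Src, Dst} \<union> Rel ` {..<n}"

definition node_pairs :: "nat \<Rightarrow> node set set" where
  "node_pairs n = {e. e \<subseteq> nodes n \<and> card e = 2}"

text \<open>Interest profiles live in R x R^(m-1) = R^m (first coordinate = direction of S),
  with m - 1 = CARD('k).  S = (1,0), D = (0, e_j1).\<close>
definition S_prof :: "real \<times> (real ^ 'k)" where
  "S_prof = (1, 0)"

definition D_prof :: "'k \<Rightarrow> real \<times> (real ^ 'k)" where
  "D_prof j1 = (0, axis j1 1)"

definition pos_ball :: "(real ^ 'k) set" where
  "pos_ball = {w. (\<forall>j. 0 \<le> w $ j) \<and> norm w \<le> 1}"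

text \<open>Uniform (normalised surface) measure on the positive orthant of the unit sphere of R^(m-1),
  as the normalised cone measure: image of the uniform measure on the positive orthant of the ball
  under radial projection.\<close>
definition unif_pos_sphere :: "(real ^ 'k) measure" where
  "unif_pos_sphere = distr (uniform_measure lborel pos_ball) borel (\<lambda>w. w /\<^sub>R norm w)"

text \<open>Relay profile law: angle theta with S uniform on [0, pi/2], and given theta the profile is
  uniform among unit vectors of the positive orthant at angle theta from S, i.e.
  (cos theta, sin theta * u) with u uniform on the positive orthant of the unit sphere of R^(m-1).\<close>
definition profile_distr :: "(real \<times> (real ^ 'k)) measure" where
  "profile_distr =
     distr (uniform_measure lborel {0..pi/2} \<Otimes>\<^sub>M unif_pos_sphere) borel
       (\<lambda>(\<theta>, u). (cos \<theta>, sin \<theta> *\<^sub>R u))"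

text \<open>Meeting instants of a Poisson process given by its inter-meeting times.\<close>
definition meet_times :: "(nat \<Rightarrow> real) \<Rightarrow> real set" where
  "meet_times X = range (\<lambda>k. \<Sum>j\<le>k. X j)"

definition deliv_time ::
  "nat \<Rightarrow> real \<Rightarrow> (nat \<Rightarrow> real \<times> (real ^ 'k)) \<Rightarrow> real \<times> (real ^ 'k)
     \<Rightarrow> (node set \<Rightarrow> real set) \<Rightarrow> real" where
  "deliv_time n \<gamma> P d MT =
     (let tSD = Inf (MT {Src, Dst});
          H1 = {(i, t). i < n \<and> \<gamma> \<le> P i \<bullet> d \<and> t \<in> MT {Src, Rel i} \<and> t \<le> real n};
          H2 = {(i, t). i < n \<and> t \<in> MT {Src, Rel i} \<and> real n < t};
          H = (if H1 \<noteq> {} then H1 else H2);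
          h = Inf (snd ` H);
          r = (SOME i. (i, h) \<in> H)
      in min tSD (Inf {t \<in> MT {Rel r, Dst}. h \<le> t}))"

definition rv_events :: "'w measure \<Rightarrow> 'a measure \<Rightarrow> ('w \<Rightarrow> 'a) \<Rightarrow> 'w set set" where
  "rv_events M N X = {X -` A \<inter> space M | A. A \<in> sets N}"

end

(* Fix eps > 0. Call a relay early if its interest in D is at least gamma and it meets S before
   eps. Relays are early independently, each with probability p c where p > 0 is the probability
   of interest at least gamma and c = 1 - exp (-lam eps), so some relay is early with probability
   1 - (1 - p c)^n. First meetings with S are a.s. distinct, so then there is a unique first early
   relay R_r, and S hands it its copy before eps <= n. Which relay this is depends only on the
   profiles and the first meetings with S, hence is independent of the first meetings E of S and
   Y_r of R_r with D; the delivery time is then min(E, Y_r), of mean 1/(2 lam), up to errors of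
   order eps. Otherwise the delivery happens by E, of mean 1/lam. This gives
   |2 lam E[T] - 1| <= 2 (1 - p c)^n + 2 lam eps for every n, and the claim follows by letting
   n -> infinity and then eps -> 0. *)

theory Submission
  imports Defs
begin

section \<open>Meeting times and the delivery time\<close>

lemma first_in_meet_times: "x 0 \<in> meet_times x"
  unfolding meet_times_def by (rule image_eqI[of _ _ 0]) auto

lemma first_le_meet_times:
  assumes "\<And>k. 0 \<le> x k" and "t \<in> meet_times x"
  shows "x 0 \<le> t"
proof -
  obtain k where "t = (\<Sum>j\<le>k. x j)"
    using assms(2) unfolding meet_times_def by auto
  moreover have "x 0 \<le> (\<Sum>j\<le>k. x j)"
    by (rule member_le_sum) (auto simp: assms(1))
  ultimately show ?thesis by simp
qed

lemma Inf_meet_times_from: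
  assumes "\<And>k. 0 \<le> x k" and "h \<le> x 0"
  shows "Inf {t \<in> meet_times x. h \<le> t} = x 0"
  using first_in_meet_times[of x] first_le_meet_times[OF assms(1)] assms(2)
  by (intro cInf_eq_minimum) auto

lemma Inf_meet_times:
  assumes "\<And>k. 0 \<le> x k"
  shows "Inf (meet_times x) = x 0"
  using first_in_meet_times[of x] first_le_meet_times[OF assms]
  by (intro cInf_eq_minimum) auto

lemma Inf_snd_SOME_unique_min:
  fixes h :: real
  assumes mem: "(i, h) \<in> H" and min: "\<And>j t. (j, t) \<in> H \<Longrightarrow> h \<le> t"
    and unique: "\<And>j. (j, h) \<in> H \<Longrightarrow> j = i"
  shows "Inf (snd ` H) = h" and "(SOME j. (j, h) \<in> H) = i"
proof -
  have "h \<in> snd ` H" using mem by force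
  moreover have "\<And>t. t \<in> snd ` H \<Longrightarrow> h \<le> t" using min by force
  ultimately show "Inf (snd ` H) = h" by (rule cInf_eq_minimum)
  show "(SOME j. (j, h) \<in> H) = i"
    using mem unique by (rule some_equality)
qed

lemma deliv_time_le_first_SD:
  assumes "\<And>k. 0 \<le> x {Src, Dst} k"
  shows "deliv_time n g P d (\<lambda>e. meet_times (x e)) \<le> x {Src, Dst} 0"
  unfolding deliv_time_def Let_def using Inf_meet_times[OF assms] by simp

text \<open>Relays meeting S after eps are no competition for R_i since eps \<le> n, so R_i is the strict
  minimum of the handover set of deliv_time.\<close>
lemma deliv_time_via_first_relay:
  fixes P :: "nat \<Rightarrow> real \<times> (real ^ 'k)"
  assumes nonneg_SD: "\<And>k. 0 \<le> x {Src, Dst} k" and nonneg_RD: "\<And>k. 0 \<le> x {Rel i, Dst} k"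
    and nonneg_SR: "\<And>j k. j < n \<Longrightarrow> 0 \<le> x {Src, Rel j} k"
    and i: "i < n" "g \<le> P i \<bullet> d" "x {Src, Rel i} 0 \<le> eps" and eps: "eps \<le> real n"
    and first: "\<And>j. j < n \<Longrightarrow> j \<noteq> i \<Longrightarrow> g \<le> P j \<bullet> d \<Longrightarrow> x {Src, Rel j} 0 \<le> eps
                   \<Longrightarrow> x {Src, Rel i} 0 < x {Src, Rel j} 0"
    and handover: "x {Src, Rel i} 0 \<le> x {Rel i, Dst} 0"
  shows "deliv_time n g P d (\<lambda>e. meet_times (x e)) = min (x {Src, Dst} 0) (x {Rel i, Dst} 0)"
proof -
  define H where "H = {(j, t). j < n \<and> g \<le> P j \<bullet> d \<and> t \<in> meet_times (x {Src, Rel j}) \<and> t \<le> real n}"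
  have iH: "(i, x {Src, Rel i} 0) \<in> H"
    unfolding H_def using i eps first_in_meet_times by auto
  have a_le: "x {Src, Rel j} 0 \<le> t" and j: "j < n" "g \<le> P j \<bullet> d" "t \<le> real n"
    if "(j, t) \<in> H" for j t
    using that first_le_meet_times[OF nonneg_SR] unfolding H_def by auto
  have earlier: "x {Src, Rel i} 0 < x {Src, Rel j} 0" if "(j, t) \<in> H" "j \<noteq> i" for j t
    using first[OF j(1)[OF that(1)] that(2) j(2)[OF that(1)]] i(3) by (cases "x {Src, Rel j} 0 \<le> eps") auto
  have lower: "x {Src, Rel i} 0 \<le> t" if "(j, t) \<in> H" for j t
    using a_le[OF that] earlier[OF that] by (cases "j = i") auto
  have unique: "j = i" if "(j, x {Src, Rel i} 0) \<in> H" for j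
    using a_le[OF that] earlier[OF that] by force
  note H_min = Inf_snd_SOME_unique_min[OF iH lower unique]
  have "H \<noteq> {}" using iH by auto
  then show ?thesis
    unfolding deliv_time_def Let_def H_def[symmetric]
    using Inf_meet_times[of "x {Src, Dst}", OF nonneg_SD]
      Inf_meet_times_from[of "x {Rel i, Dst}", OF nonneg_RD handover] by (simp add: H_min)
qed

lemma nn_integral_of_bool:
  assumes "{\<omega> \<in> space M. Q \<omega>} \<in> sets M"
  shows "(\<integral>\<^sup>+\<omega>. of_bool (Q \<omega>) \<partial>M) = emeasure M {\<omega> \<in> space M. Q \<omega>}"
proof -
  have "(\<integral>\<^sup>+\<omega>. of_bool (Q \<omega>) \<partial>M) = (\<integral>\<^sup>+\<omega>. indicator {\<omega> \<in> space M. Q \<omega>} \<omega> \<partial>M)"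
    by (intro nn_integral_cong) (simp add: indicator_def)
  also have "\<dots> = emeasure M {\<omega> \<in> space M. Q \<omega>}"
    using assms by (rule nn_integral_indicator)
  finally show ?thesis .
qed


lemma (in prob_space) nn_integral_mult_indep_var:
  fixes f h :: "'b \<Rightarrow> ennreal"
  assumes "indep_var S U T V" and "f \<in> borel_measurable S" and "h \<in> borel_measurable T"
  shows "(\<integral>\<^sup>+\<omega>. f (U \<omega>) * h (V \<omega>) \<partial>M) = (\<integral>\<^sup>+\<omega>. f (U \<omega>) \<partial>M) * (\<integral>\<^sup>+\<omega>. h (V \<omega>) \<partial>M)"
proof -
  have "indep_var borel (f \<circ> U) borel (h \<circ> V)"
    using assms by (rule indep_var_compose)
  then have "indep_vars (\<lambda>_. borel) (case_bool (f \<circ> U) (h \<circ> V)) UNIV"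
    unfolding indep_var_def by (rule indep_vars_cong[THEN iffD1, rotated 3]) (auto split: bool.split)
  then have "(\<integral>\<^sup>+\<omega>. (\<Prod>b\<in>UNIV. case_bool (f \<circ> U) (h \<circ> V) b \<omega>) \<partial>M)
      = (\<Prod>b\<in>UNIV. \<integral>\<^sup>+\<omega>. case_bool (f \<circ> U) (h \<circ> V) b \<omega> \<partial>M)"
    by (intro indep_vars_nn_integral) auto
  then show ?thesis by (simp add: UNIV_bool mult.commute o_def)
qed

lemma (in prob_space) indep_var_of_indep_vars:
  assumes "indep_vars M' X I" and "i \<in> I" "j \<in> I" "i \<noteq> j"
  shows "indep_var (M' i) (X i) (M' j) (X j)"
proof -
  have "indep_var (M' i) ((\<lambda>x. x i) \<circ> (\<lambda>\<omega>. restrict (\<lambda>i. X i \<omega>) {i}))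
      (M' j) ((\<lambda>x. x j) \<circ> (\<lambda>\<omega>. restrict (\<lambda>i. X i \<omega>) {j}))"
    using assms
    by (intro indep_var_compose[OF indep_var_restrict] measurable_component_singleton) auto
  then show ?thesis by (simp add: o_def)
qed

lemma (in prob_space) AE_neq_indep_distributed:
  fixes X Y :: "'a \<Rightarrow> real"
  assumes X: "distributed M lborel X Px" and Y: "distributed M lborel Y Py"
    and indep: "indep_var borel X borel Y"
  shows "AE \<omega> in M. X \<omega> \<noteq> Y \<omega>"
proof -
  have "indep_var lborel X lborel Y"
    using indep unfolding indep_var_def indep_vars_def2
    by (simp add: case_bool_if if_distrib cong: if_cong)
  then have J: "distributed M (lborel \<Otimes>\<^sub>M lborel) (\<lambda>\<omega>. (X \<omega>, Y \<omega>)) (\<lambda>(x, y). Px x * Py y)"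
    by (intro distributed_joint_indep[OF _ _ X Y]) (auto intro: lborel.sigma_finite_measure_axioms)
  have "AE y in lborel. x \<noteq> (y :: real)" for x
    using AE_lborel_singleton[of x] by (rule AE_mp) auto
  then have "AE x in lborel. AE y in lborel. fst (x, y) \<noteq> (snd (x, y) :: real)"
    by simp
  then have "AE z in lborel \<Otimes>\<^sub>M lborel. fst z \<noteq> (snd z :: real)"
    by (rule lborel_pair.AE_pair_measure[rotated]) measurable
  moreover have "Measurable.pred (lborel \<Otimes>\<^sub>M lborel) (\<lambda>z :: real \<times> real. fst z \<noteq> snd z)"
    by measurable
  ultimately have "AE \<omega> in M. fst (X \<omega>, Y \<omega>) \<noteq> snd (X \<omega>, Y \<omega>)"
    by (subst distributed_AE2[OF J]) (auto elim: AE_mp)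
  then show ?thesis by simp
qed

lemma (in prob_space) AE_exponential_nonneg:
  assumes "distributed M lborel X (exponential_density l)"
  shows "AE \<omega> in M. 0 \<le> X \<omega>"
  by (subst distributed_AE2[OF assms]) (auto simp: exponential_density_def)

lemma (in prob_space) nn_integral_exponential:
  assumes "0 < l" and "distributed M lborel X (exponential_density l)"
  shows "(\<integral>\<^sup>+ \<omega>. ennreal (X \<omega>) \<partial>M) = ennreal (1 / l)"
  using nn_integral_erlang_ith_moment[of l 0 1] assms
  by (subst distributed_nn_integral[symmetric, OF assms(2)]) (auto simp: ennreal_mult')

section \<open>The relay profile distribution\<close>

lemma sets_pos_ball [measurable]: "(pos_ball :: (real ^ 'k::finite) set) \<in> sets borel"
proof -
  have "pos_ball = (\<Inter>j. {w::real ^ 'k. 0 \<le> w $ j}) \<inter> cball 0 1"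
    unfolding pos_ball_def by auto
  also have "\<dots> \<in> sets borel"
    by (intro borel_closed closed_Int closed_INT) (auto intro: closed_halfspace_component_ge_cart)
  finally show ?thesis .
qed

lemma emeasure_pos_ball_finite: "emeasure lborel (pos_ball :: (real ^ 'k::finite) set) < \<infinity>"
proof -
  have "emeasure lborel (pos_ball :: (real ^ 'k) set) \<le> emeasure lborel (cball (0 :: real ^ 'k) 1)"
    by (intro emeasure_mono) (auto simp: pos_ball_def)
  then show ?thesis
    using emeasure_lborel_cball_finite[of "0 :: real ^ 'k" 1] by simp
qed

text \<open>The centre is pushed by \<delta> into the open orthant so that the whole ball has nonnegative
  coordinates.\<close>
lemma ball_near_axis_subset:
  fixes j1 :: "'k::finite"
  defines "\<delta> \<equiv> 1 / (100 * real CARD('k))"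
  defines "c \<equiv> (\<chi> j. if j = j1 then 9/10 else \<delta>) :: real ^ 'k"
  shows "ball c \<delta> \<subseteq> pos_ball \<inter> (\<lambda>w. w /\<^sub>R norm w) -` {u. 9/10 \<le> u $ j1}"
proof
  fix w assume "w \<in> ball c \<delta>"
  then have dist: "norm (w - c) < \<delta>" by (simp add: dist_norm norm_minus_commute)
  have K: "1 \<le> real CARD('k)" by simp
  then have \<delta>: "0 < \<delta>" "\<delta> \<le> 1/100" unfolding \<delta>_def by (auto simp: field_simps)
  have comp: "\<bar>w $ j - c $ j\<bar> < \<delta>" for j
    using component_le_norm_cart[of "w - c" j] dist by simp
  have "norm c \<le> (\<Sum>j\<in>UNIV. \<bar>c $ j\<bar>)" by (rule norm_le_l1_cart)
  also have "\<dots> \<le> (\<Sum>j\<in>UNIV. (if j = j1 then 9/10 else 0) + \<delta>)"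
    by (rule sum_mono) (use \<delta> in \<open>auto simp: c_def\<close>)
  also have "\<dots> = 91/100" by (simp add: sum.distrib \<delta>_def)
  finally have "norm w \<le> 92/100"
    using norm_triangle_ineq[of c "w - c"] dist \<delta> by simp
  moreover have "89/100 \<le> w $ j1" using comp[of j1] \<delta> by (simp add: c_def)
  moreover have "0 < norm w"
    using \<open>89/100 \<le> w $ j1\<close> component_le_norm_cart[of w j1] by linarith
  ultimately have "9/10 \<le> w $ j1 / norm w"
    unfolding pos_le_divide_eq[OF \<open>0 < norm w\<close>] by linarith
  also have "w $ j1 / norm w = (w /\<^sub>R norm w) $ j1" by (simp add: divide_inverse_commute)
  finally have "w \<in> (\<lambda>w. w /\<^sub>R norm w) -` {u. 9/10 \<le> u $ j1}" by simp
  moreover have "0 \<le> w $ j" for j using comp[of j] \<delta> by (auto simp: c_def split: if_splits)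
  ultimately show "w \<in> pos_ball \<inter> (\<lambda>w. w /\<^sub>R norm w) -` {u. 9/10 \<le> u $ j1}"
    using \<open>norm w \<le> 92/100\<close> unfolding pos_ball_def by simp
qed

lemma emeasure_pos_ball_near_axis:
  fixes j1 :: "'k::finite"
  shows "0 < emeasure lborel (pos_ball \<inter> (\<lambda>w::real ^ 'k. w /\<^sub>R norm w) -` {u. 9/10 \<le> u $ j1})"
proof -
  define \<delta> where "\<delta> = 1 / (100 * real CARD('k))"
  define c :: "real ^ 'k" where "c = (\<chi> j. if j = j1 then 9/10 else \<delta>)"
  have "0 < emeasure lborel (ball c \<delta>)"
    by (simp add: \<delta>_def emeasure_ball unit_ball_vol_pos)
  also have "\<dots> \<le> emeasure lborel (pos_ball \<inter> (\<lambda>w::real ^ 'k. w /\<^sub>R norm w) -` {u. 9/10 \<le> u $ j1})"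
    using ball_near_axis_subset[of j1] unfolding \<delta>_def c_def by (intro emeasure_mono) auto
  finally show ?thesis .
qed

lemma prob_space_unif_pos_sphere: "prob_space (unif_pos_sphere :: (real ^ 'k::finite) measure)"
proof -
  have "0 < emeasure lborel (pos_ball :: (real ^ 'k) set)"
    using emeasure_pos_ball_near_axis[of undefined]
    by (rule order_less_le_trans) (rule emeasure_mono; simp add: sets_pos_ball)
  then show ?thesis
    unfolding unif_pos_sphere_def
    using emeasure_pos_ball_finite[where 'k='k]
    by (intro prob_space.prob_space_distr prob_space_uniform_measure) auto
qed

lemma emeasure_unif_pos_sphere_near_axis:
  fixes j1 :: "'k::finite"
  shows "0 < emeasure (unif_pos_sphere :: (real ^ 'k) measure) {u. 9/10 \<le> u $ j1}"
proof -
  have "emeasure (unif_pos_sphere :: (real ^ 'k) measure) {u. 9/10 \<le> u $ j1}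
      = emeasure lborel (pos_ball \<inter> (\<lambda>w::real ^ 'k. w /\<^sub>R norm w) -` {u. 9/10 \<le> u $ j1})
        / emeasure lborel (pos_ball :: (real ^ 'k) set)"
    unfolding unif_pos_sphere_def by (subst emeasure_distr) (auto simp: emeasure_uniform_measure)
  then show ?thesis
    using emeasure_pos_ball_near_axis[of j1] emeasure_pos_ball_finite[where 'k='k]
    by (simp add: ennreal_zero_less_divide)
qed

lemma emeasure_uniform_angle: "0 < emeasure (uniform_measure lborel {0..pi/2}) {pi/6..pi/2}"
  by (simp add: emeasure_uniform_measure ennreal_zero_less_divide)

lemma measurable_profile_map:
  "(\<lambda>(\<theta>, u). (cos \<theta>, sin \<theta> *\<^sub>R u)) \<in> measurable (uniform_measure lborel {0..pi/2} \<Otimes>\<^sub>M unif_pos_sphere)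
     (borel :: (real \<times> (real ^ 'k::finite)) measure)"
proof -
  have eq: "measurable (uniform_measure lborel {0..pi/2} \<Otimes>\<^sub>M unif_pos_sphere) (borel :: (real \<times> (real ^ 'k)) measure)
      = measurable (borel \<Otimes>\<^sub>M borel) borel"
    by (rule measurable_cong_sets) (auto intro!: sets_pair_measure_cong simp: unif_pos_sphere_def)
  show ?thesis unfolding eq by measurable
qed

lemma prob_space_profile_distr: "prob_space (profile_distr :: (real \<times> (real ^ 'k::finite)) measure)"
  unfolding profile_distr_def
  by (intro prob_space.prob_space_distr measurable_profile_map prob_space_pair
      prob_space_unif_pos_sphere prob_space_uniform_measure) auto

text \<open>Interest at least 9/20 in D is reached with angle at least pi/6 (sin \<ge> 1/2) and
  u $ j1 \<ge> 9/10.\<close>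
lemma emeasure_profile_distr_interest:
  fixes j1 :: "'k::finite"
  assumes "g \<le> 9/20"
  shows "0 < emeasure (profile_distr :: (real \<times> (real ^ 'k)) measure) {x. g \<le> x \<bullet> D_prof j1}"
proof -
  let ?U = "uniform_measure lborel {0..pi/2}" and ?S = "unif_pos_sphere :: (real ^ 'k) measure"
  let ?\<phi> = "\<lambda>(\<theta>, u). (cos \<theta>, sin \<theta> *\<^sub>R u) :: real \<times> (real ^ 'k)"
  let ?G = "{x :: real \<times> (real ^ 'k). g \<le> x \<bullet> D_prof j1}" and ?Q = "{u :: real ^ 'k. 9/10 \<le> u $ j1}"
  interpret S: prob_space ?S by (rule prob_space_unif_pos_sphere)
  have "g \<le> sin \<theta> * u $ j1" if "\<theta> \<in> {pi/6..pi/2}" and "9/10 \<le> u $ j1" for \<theta> u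
  proof -
    have "1/2 \<le> sin \<theta>"
      using sin_monotone_2pi_le[of "pi/6" \<theta>] that(1) by (simp add: sin_30)
    then have "1/2 * (9/10) \<le> sin \<theta> * u $ j1" using that(2) by (intro mult_mono) auto
    then show ?thesis using assms by simp
  qed
  then have sub: "{pi/6..pi/2} \<times> ?Q \<subseteq> ?\<phi> -` ?G \<inter> space (?U \<Otimes>\<^sub>M ?S)"
    by (auto simp: D_prof_def inner_axis space_pair_measure unif_pos_sphere_def)
  have G: "?G \<in> sets borel" by measurable
  have "0 < emeasure ?U {pi/6..pi/2} * emeasure ?S ?Q"
    using emeasure_uniform_angle emeasure_unif_pos_sphere_near_axis[of j1]
    by (simp add: ennreal_zero_less_mult_iff)
  also have "\<dots> = emeasure (?U \<Otimes>\<^sub>M ?S) ({pi/6..pi/2} \<times> ?Q)"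
    by (intro S.emeasure_pair_measure_Times[symmetric]) (auto simp: unif_pos_sphere_def)
  also have "\<dots> \<le> emeasure (?U \<Otimes>\<^sub>M ?S) (?\<phi> -` ?G \<inter> space (?U \<Otimes>\<^sub>M ?S))"
    by (rule emeasure_mono[OF sub measurable_sets[OF measurable_profile_map G]])
  also have "\<dots> = emeasure profile_distr ?G"
    unfolding profile_distr_def by (rule emeasure_distr[symmetric, OF measurable_profile_map G])
  finally show ?thesis .
qed

lemma measure_profile_distr_interest:
  fixes j1 :: "'k::finite"
  assumes "g \<le> 9/20"
  shows "0 < measure (profile_distr :: (real \<times> (real ^ 'k)) measure) {x. g \<le> x \<bullet> D_prof j1}"
proof -
  interpret profile: prob_space "profile_distr :: (real \<times> (real ^ 'k)) measure"
    by (rule prob_space_profile_distr)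
  show ?thesis
    using emeasure_profile_distr_interest[OF assms, of j1] by (simp add: profile.emeasure_eq_measure)
qed

section \<open>The joint family of random quantities\<close>

lemma node_pairs_SD [simp]: "{Src, Dst} \<in> node_pairs n"
  and node_pairs_SR [simp]: "i < n \<Longrightarrow> {Src, Rel i} \<in> node_pairs n"
  and node_pairs_RD [simp]: "i < n \<Longrightarrow> {Rel i, Dst} \<in> node_pairs n"
  by (simp_all add: node_pairs_def nodes_def)

lemma finite_node_pairs: "finite (node_pairs n)"
  by (rule finite_subset[of _ "Pow (nodes n)"]) (auto simp: node_pairs_def nodes_def)

text \<open>All random quantities of the network as one family: Inl i carries the profile of R_i and
  Inr (e, k) the k-th inter-meeting time of the pair e, embedded as (t, 0). The independence
  hypothesis of the model is the independence of this family.\<close>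
type_synonym 'k outcome = "nat + node set \<times> nat \<Rightarrow> real \<times> (real ^ 'k)"

definition outcome :: "(nat \<Rightarrow> 'w \<Rightarrow> real \<times> (real ^ 'k)) \<Rightarrow> (node set \<Rightarrow> nat \<Rightarrow> 'w \<Rightarrow> real) \<Rightarrow> 'w \<Rightarrow> 'k outcome"
  where "outcome P X \<omega> j = (case j of Inl i \<Rightarrow> P i \<omega> | Inr (e, k) \<Rightarrow> (X e k \<omega>, 0))"

definition profile_at :: "nat \<Rightarrow> 'k outcome \<Rightarrow> real \<times> (real ^ 'k)"
  where "profile_at i x = x (Inl i)"

definition first_meet_at :: "node set \<Rightarrow> 'k outcome \<Rightarrow> real"
  where "first_meet_at e x = fst (x (Inr (e, 0)))"

lemma profile_at_outcome [simp]: "profile_at i (outcome P X \<omega>) = P i \<omega>"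
  by (simp add: profile_at_def outcome_def)

lemma first_meet_at_outcome [simp]: "first_meet_at e (outcome P X \<omega>) = X e 0 \<omega>"
  by (simp add: first_meet_at_def outcome_def)

lemma profile_at_restrict [simp]: "Inl i \<in> A \<Longrightarrow> profile_at i (restrict x A) = profile_at i x"
  by (simp add: profile_at_def)

lemma first_meet_at_restrict [simp]:
  "Inr (e, 0) \<in> A \<Longrightarrow> first_meet_at e (restrict x A) = first_meet_at e x"
  by (simp add: first_meet_at_def)

lemma measurable_apply_PiM:
  "(\<lambda>x. x j) \<in> measurable (PiM A (\<lambda>_. borel)) (borel :: 'b::topological_space measure)"
proof (cases "j \<in> A")
  case False
  have "(\<lambda>x. undefined) \<in> measurable (PiM A (\<lambda>_. borel)) (borel :: 'b measure)" by simp
  then show ?thesis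
    by (rule measurable_cong[THEN iffD1, rotated]) (auto simp: space_PiM PiE_def extensional_def False)
qed (rule measurable_component_singleton)

lemma measurable_profile_at [measurable]:
  "profile_at i \<in> measurable (PiM A (\<lambda>_. borel)) (borel :: (real \<times> (real ^ 'k::finite)) measure)"
  unfolding profile_at_def[abs_def] by (rule measurable_apply_PiM)

lemma measurable_first_meet_at [measurable]:
  "first_meet_at e \<in> borel_measurable (PiM A (\<lambda>_. borel :: (real \<times> (real ^ 'k::finite)) measure))"
proof -
  have "(fst :: real \<times> (real ^ 'k) \<Rightarrow> real) \<in> borel_measurable borel"
    by (intro borel_measurable_continuous_onI continuous_intros)
  then show ?thesis
    unfolding first_meet_at_def[abs_def] by (rule measurable_compose[OF measurable_apply_PiM])
qed

lemma (in prob_space) indep_vars_outcome: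
  fixes P :: "nat \<Rightarrow> 'a \<Rightarrow> real \<times> (real ^ 'k)"
  assumes P: "\<And>i. i \<in> I \<Longrightarrow> P i \<in> borel_measurable M"
    and X: "\<And>e k. e \<in> E \<Longrightarrow> X e k \<in> borel_measurable M"
    and indep: "indep_sets (case_sum (\<lambda>i. rv_events M borel (P i)) (\<lambda>(e, k). rv_events M borel (X e k)))
                  (Inl ` I \<union> Inr ` (E \<times> UNIV))"
  shows "indep_vars (\<lambda>_. borel) (\<lambda>j \<omega>. outcome P X \<omega> j) (Inl ` I \<union> Inr ` (E \<times> UNIV))"
  unfolding indep_vars_def2
proof (intro conjI ballI)
  fix j assume "j \<in> Inl ` I \<union> Inr ` (E \<times> (UNIV :: nat set))"
  then show "random_variable borel (\<lambda>\<omega>. outcome P X \<omega> j)"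
    using P X by (auto simp: outcome_def)
next
  have "{(\<lambda>\<omega>. outcome P X \<omega> j) -` A \<inter> space M |A. A \<in> sets borel}
      \<subseteq> case_sum (\<lambda>i. rv_events M borel (P i)) (\<lambda>(e, k). rv_events M borel (X e k)) j" for j
  proof (cases j)
    case (Inl i)
    then show ?thesis by (auto simp: outcome_def rv_events_def)
  next
    case (Inr ek)
    then obtain e k where j: "j = Inr (e, k)" by (cases ek) auto
    show ?thesis
    proof safe
      fix A :: "(real \<times> (real ^ 'k)) set" assume "A \<in> sets borel"
      then have "(\<lambda>t::real. (t, 0 :: real ^ 'k)) -` A \<in> sets borel"
        using measurable_sets[of "\<lambda>t::real. (t, 0 :: real ^ 'k)" borel borel A] by simp
      moreover have "(\<lambda>\<omega>. outcome P X \<omega> j) -` A \<inter> space M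
          = X e k -` ((\<lambda>t. (t, 0 :: real ^ 'k)) -` A) \<inter> space M"
        by (auto simp: outcome_def j)
      ultimately show "(\<lambda>\<omega>. outcome P X \<omega> j) -` A \<inter> space M
          \<in> case_sum (\<lambda>i. rv_events M borel (P i)) (\<lambda>(e, k). rv_events M borel (X e k)) j"
        unfolding j rv_events_def by auto
    qed
  qed
  then show "indep_sets (\<lambda>j. {(\<lambda>\<omega>. outcome P X \<omega> j) -` A \<inter> space M |A. A \<in> sets borel})
      (Inl ` I \<union> Inr ` (E \<times> (UNIV :: nat set)))"
    by (rule indep_sets_mono_sets[OF indep])
qed

definition early :: "real \<Rightarrow> real \<times> (real ^ 'k) \<Rightarrow> real \<Rightarrow> nat \<Rightarrow> 'k outcome \<Rightarrow> bool"
  where "early g d eps i x \<longleftrightarrow> g \<le> profile_at i x \<bullet> d \<and> first_meet_at {Src, Rel i} x \<le> eps"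

definition first_early :: "nat \<Rightarrow> real \<Rightarrow> real \<times> (real ^ 'k) \<Rightarrow> real \<Rightarrow> nat \<Rightarrow> 'k outcome \<Rightarrow> bool"
  where "first_early n g d eps i x \<longleftrightarrow> early g d eps i x \<and>
     (\<forall>j<n. j \<noteq> i \<longrightarrow> early g d eps j x \<longrightarrow> first_meet_at {Src, Rel i} x < first_meet_at {Src, Rel j} x)"

definition relay_coords :: "nat \<Rightarrow> (nat + node set \<times> nat) set"
  where "relay_coords i = {Inl i, Inr ({Src, Rel i}, 0)}"

lemma measurable_early [measurable]:
  "Measurable.pred (PiM A (\<lambda>_. borel)) (early g d eps i :: 'k::finite outcome \<Rightarrow> bool)"
  unfolding early_def by measurable

lemma measurable_first_early [measurable]:
  "Measurable.pred (PiM A (\<lambda>_. borel)) (first_early n g d eps i :: 'k::finite outcome \<Rightarrow> bool)"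
  unfolding first_early_def by measurable

lemma early_restrict:
  "relay_coords i \<subseteq> A \<Longrightarrow> early g d eps i (restrict x A) \<longleftrightarrow> early g d eps i x"
  by (simp add: early_def relay_coords_def)

lemma first_early_unique:
  assumes "first_early n g d eps i x" "first_early n g d eps j x" "i < n" "j < n"
  shows "i = j"
  using assms unfolding first_early_def by (metis less_asym)

lemma sum_first_early_le_1: "(\<Sum>i<n. of_bool (first_early n g d eps i x) :: ennreal) \<le> 1"
proof -
  have "card ({..<n} \<inter> {i. first_early n g d eps i x}) \<le> 1"
    using first_early_unique[of n g d eps _ x] by (auto intro: card_le_Suc0_iff_eq[THEN iffD2])
  then show ?thesis by simp
qed

lemma ex_first_early:
  assumes distinct: "inj_on (\<lambda>i. first_meet_at {Src, Rel i} x) {..<n}"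
    and "j < n" and "early g d eps j x"
  shows "\<exists>r<n. first_early n g d eps r x"
proof -
  let ?a = "\<lambda>i. first_meet_at {Src, Rel i} x" and ?G = "{i. i < n \<and> early g d eps i x}"
  obtain r where r: "r \<in> ?G" "\<And>i. i \<in> ?G \<Longrightarrow> ?a r \<le> ?a i"
    using ex_min_if_finite[of "?a ` ?G"] assms(2,3) by fastforce
  have "?a r < ?a i" if "i \<in> ?G" "i \<noteq> r" for i
    using r that distinct by (force simp: inj_on_def order_le_less)
  then show ?thesis using r by (auto simp: first_early_def)
qed

lemma ex_early_le_sum_first_early:
  assumes "inj_on (\<lambda>i. first_meet_at {Src, Rel i} x) {..<n}"
  shows "of_bool (\<exists>i<n. early g d eps i x) \<le> (\<Sum>i<n. of_bool (first_early n g d eps i x) :: ennreal)"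
proof (cases "\<exists>i<n. early g d eps i x")
  case True
  then obtain r where "r < n" "first_early n g d eps r x"
    using ex_first_early[OF assms] by blast
  then have "of_bool (first_early n g d eps r x) \<le> (\<Sum>i<n. of_bool (first_early n g d eps i x) :: ennreal)"
    by (intro member_le_sum) auto
  then show ?thesis using \<open>first_early n g d eps r x\<close> True by simp
next
  case False
  then show ?thesis by (simp only: of_bool_eq zero_le)
qed

section \<open>A network with n relays\<close>

locale ib_network = prob_space M
  for M :: "'w measure" and n :: nat and lam :: real
    and P :: "nat \<Rightarrow> 'w \<Rightarrow> real \<times> (real ^ 'k::finite)" and X :: "node set \<Rightarrow> nat \<Rightarrow> 'w \<Rightarrow> real"
    and g :: real and d :: "real \<times> (real ^ 'k)" and eps :: real +
  assumes lam_pos: "0 < lam"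
    and P_distr: "\<And>i. i < n \<Longrightarrow> distr M borel (P i) = profile_distr"
    and P_rv: "\<And>i. i < n \<Longrightarrow> P i \<in> borel_measurable M"
    and X_exp: "\<And>e k. e \<in> node_pairs n \<Longrightarrow> distributed M lborel (X e k) (exponential_density lam)"
    and indep: "indep_sets (case_sum (\<lambda>i. rv_events M borel (P i)) (\<lambda>(e, k). rv_events M borel (X e k)))
                  (Inl ` {..<n} \<union> Inr ` (node_pairs n \<times> UNIV))"
    and eps_pos: "0 < eps" and eps_le_n: "eps \<le> real n"
begin

definition delivery_time :: "'w \<Rightarrow> real"
  where "delivery_time \<omega> = deliv_time n g (\<lambda>i. P i \<omega>) d (\<lambda>e. meet_times (\<lambda>k. X e k \<omega>))"

abbreviation interest_prob :: real
  where "interest_prob \<equiv> measure profile_distr {x. g \<le> x \<bullet> d}"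

abbreviation meet_prob :: real
  where "meet_prob \<equiv> 1 - exp (- eps * lam)"

text \<open>Which relay gets the copy is decided by the coordinates in sel_coords (profiles and first
  meetings with S); what happens afterwards depends on those in dst_coords (first meetings with D).\<close>
definition sel_coords :: "(nat + node set \<times> nat) set"
  where "sel_coords = (\<Union>i<n. relay_coords i)"

definition dst_coords :: "(nat + node set \<times> nat) set"
  where "dst_coords = (\<lambda>e. Inr (e, 0)) ` insert {Src, Dst} ((\<lambda>i. {Rel i, Dst}) ` {..<n})"

definition sel_vec :: "'w \<Rightarrow> 'k outcome"
  where "sel_vec \<omega> = restrict (outcome P X \<omega>) sel_coords"

definition dst_vec :: "'w \<Rightarrow> 'k outcome"
  where "dst_vec \<omega> = restrict (outcome P X \<omega>) dst_coords"

text \<open>Bounds on the delivery time on the event that R_i is the first early relay.\<close>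
definition upper_dst :: "nat \<Rightarrow> 'k outcome \<Rightarrow> ennreal"
  where "upper_dst i y = ennreal (min (first_meet_at {Src, Dst} y) (first_meet_at {Rel i, Dst} y))
     + of_bool (first_meet_at {Rel i, Dst} y < eps) * ennreal (first_meet_at {Src, Dst} y)"

definition lower_dst :: "nat \<Rightarrow> 'k outcome \<Rightarrow> ennreal"
  where "lower_dst i y = of_bool (eps \<le> first_meet_at {Rel i, Dst} y)
     * ennreal (min (first_meet_at {Src, Dst} y) (first_meet_at {Rel i, Dst} y))"

lemma measurable_upper_dst [measurable]: "upper_dst i \<in> borel_measurable (PiM A (\<lambda>_. borel))"
  unfolding upper_dst_def by measurable

lemma measurable_lower_dst [measurable]: "lower_dst i \<in> borel_measurable (PiM A (\<lambda>_. borel))"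
  unfolding lower_dst_def by measurable

lemma X_rv [measurable]: "e \<in> node_pairs n \<Longrightarrow> X e k \<in> borel_measurable M"
  using distributed_measurable[OF X_exp] by simp

lemma indep_outcome:
  "indep_vars (\<lambda>_. borel) (\<lambda>j \<omega>. outcome P X \<omega> j) (Inl ` {..<n} \<union> Inr ` (node_pairs n \<times> UNIV))"
  using P_rv X_rv indep by (rule indep_vars_outcome) auto

lemma indep_sel_dst: "indep_var (PiM sel_coords (\<lambda>_. borel)) sel_vec (PiM dst_coords (\<lambda>_. borel)) dst_vec"
  unfolding sel_vec_def dst_vec_def
  by (rule indep_var_restrict[OF indep_outcome]) (auto simp: sel_coords_def dst_coords_def relay_coords_def)

lemma sel_vec_eval [simp]:
  assumes "i < n"
  shows "profile_at i (sel_vec \<omega>) = P i \<omega>"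
    and "first_meet_at {Src, Rel i} (sel_vec \<omega>) = X {Src, Rel i} 0 \<omega>"
proof -
  have "Inl i \<in> sel_coords" "Inr ({Src, Rel i}, 0) \<in> sel_coords"
    using assms by (auto simp: sel_coords_def relay_coords_def)
  then show "profile_at i (sel_vec \<omega>) = P i \<omega>"
    and "first_meet_at {Src, Rel i} (sel_vec \<omega>) = X {Src, Rel i} 0 \<omega>"
    by (simp_all add: sel_vec_def)
qed

lemma dst_vec_eval [simp]:
  "first_meet_at {Src, Dst} (dst_vec \<omega>) = X {Src, Dst} 0 \<omega>"
  "i < n \<Longrightarrow> first_meet_at {Rel i, Dst} (dst_vec \<omega>) = X {Rel i, Dst} 0 \<omega>"
  by (auto simp: dst_vec_def dst_coords_def)

lemma indep_first_meets:
  assumes "e \<in> node_pairs n" "e' \<in> node_pairs n" "e \<noteq> e'"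
  shows "indep_var borel (X e 0) borel (X e' 0)"
proof -
  have "indep_var borel (\<lambda>\<omega>. outcome P X \<omega> (Inr (e, 0))) borel (\<lambda>\<omega>. outcome P X \<omega> (Inr (e', 0)))"
    using assms by (intro indep_var_of_indep_vars[OF indep_outcome]) auto
  then have "indep_var borel (fst \<circ> (\<lambda>\<omega>. outcome P X \<omega> (Inr (e, 0))))
      borel (fst \<circ> (\<lambda>\<omega>. outcome P X \<omega> (Inr (e', 0))))"
    by (rule indep_var_compose) (intro borel_measurable_continuous_onI continuous_intros)+
  then show ?thesis by (simp add: o_def outcome_def)
qed

lemma AE_meet_times_nonneg: "AE \<omega> in M. \<forall>e\<in>node_pairs n. \<forall>k. 0 \<le> X e k \<omega>"
  using finite_node_pairs
  by (rule AE_finite_allI) (auto simp: AE_all_countable intro: AE_exponential_nonneg X_exp)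

lemma AE_distinct_first_meets: "AE \<omega> in M. inj_on (\<lambda>i. X {Src, Rel i} 0 \<omega>) {..<n}"
proof -
  have "AE \<omega> in M. \<forall>i\<in>{..<n}. \<forall>j\<in>{..<n}. i \<noteq> j \<longrightarrow> X {Src, Rel i} 0 \<omega> \<noteq> X {Src, Rel j} 0 \<omega>"
  proof (intro AE_finite_allI finite_lessThan)
    fix i j assume "i \<in> {..<n}" "j \<in> {..<n}"
    then show "AE \<omega> in M. i \<noteq> j \<longrightarrow> X {Src, Rel i} 0 \<omega> \<noteq> X {Src, Rel j} 0 \<omega>"
      using AE_neq_indep_distributed[OF X_exp X_exp indep_first_meets, of "{Src, Rel i}" "{Src, Rel j}"]
      by (cases "i = j") (auto simp: doubleton_eq_iff)
  qed
  then show ?thesis by (auto simp: inj_on_def elim: AE_mp)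
qed

lemma delivery_time_le_SD:
  assumes "\<forall>e\<in>node_pairs n. \<forall>k. 0 \<le> X e k \<omega>"
  shows "delivery_time \<omega> \<le> X {Src, Dst} 0 \<omega>"
  unfolding delivery_time_def using assms by (intro deliv_time_le_first_SD) simp

lemma delivery_time_first_early:
  assumes nonneg: "\<forall>e\<in>node_pairs n. \<forall>k. 0 \<le> X e k \<omega>"
    and i: "i < n" "first_early n g d eps i (sel_vec \<omega>)"
    and handover: "X {Src, Rel i} 0 \<omega> \<le> X {Rel i, Dst} 0 \<omega>"
  shows "delivery_time \<omega> = min (X {Src, Dst} 0 \<omega>) (X {Rel i, Dst} 0 \<omega>)"
  unfolding delivery_time_def
proof (rule deliv_time_via_first_relay[where eps = eps])
  show "X {Src, Rel i} 0 \<omega> < X {Src, Rel j} 0 \<omega>"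
    if "j < n" "j \<noteq> i" "g \<le> P j \<omega> \<bullet> d" "X {Src, Rel j} 0 \<omega> \<le> eps" for j
    using i that by (auto simp: first_early_def early_def)
qed (use nonneg i handover eps_le_n in \<open>auto simp: first_early_def early_def\<close>)

text \<open>The first early relay R_r gets the copy at its first meeting with S, before eps. If R_r
  meets D only later, the delivery is at min(E, Y_r); otherwise Y_r < eps and the delivery is by E.\<close>
lemma delivery_time_le_upper:
  assumes nonneg: "\<forall>e\<in>node_pairs n. \<forall>k. 0 \<le> X e k \<omega>"
    and distinct: "inj_on (\<lambda>i. X {Src, Rel i} 0 \<omega>) {..<n}"
  shows "ennreal (delivery_time \<omega>) \<le>
    of_bool (\<forall>j<n. \<not> early g d eps j (sel_vec \<omega>)) * ennreal (first_meet_at {Src, Dst} (dst_vec \<omega>))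
    + (\<Sum>i<n. of_bool (first_early n g d eps i (sel_vec \<omega>)) * upper_dst i (dst_vec \<omega>))"
    (is "_ \<le> ?none + ?sum")
proof (cases "\<exists>j<n. early g d eps j (sel_vec \<omega>)")
  case True
  then obtain j where "j < n" "early g d eps j (sel_vec \<omega>)" by blast
  moreover have "inj_on (\<lambda>i. first_meet_at {Src, Rel i} (sel_vec \<omega>)) {..<n}"
    using distinct by (simp add: inj_on_def)
  ultimately obtain r where r: "r < n" "first_early n g d eps r (sel_vec \<omega>)"
    using ex_first_early by blast
  have nonneg_r: "0 \<le> X {Src, Dst} 0 \<omega>" "0 \<le> X {Rel r, Dst} 0 \<omega>" using nonneg r(1) by auto
  have "delivery_time \<omega> \<le> min (X {Src, Dst} 0 \<omega>) (X {Rel r, Dst} 0 \<omega>)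
      + (if X {Rel r, Dst} 0 \<omega> < eps then X {Src, Dst} 0 \<omega> else 0)"
  proof (cases "X {Src, Rel r} 0 \<omega> \<le> X {Rel r, Dst} 0 \<omega>")
    case True
    then show ?thesis using delivery_time_first_early[OF nonneg r True] nonneg r(1) by simp
  next
    case False
    then have "X {Rel r, Dst} 0 \<omega> < eps" using r by (auto simp: first_early_def early_def)
    then show ?thesis
      using delivery_time_le_SD[OF nonneg] nonneg_r by auto
  qed
  then have "ennreal (delivery_time \<omega>) \<le> ennreal (min (X {Src, Dst} 0 \<omega>) (X {Rel r, Dst} 0 \<omega>)
      + (if X {Rel r, Dst} 0 \<omega> < eps then X {Src, Dst} 0 \<omega> else 0))"
    by (rule ennreal_leI)
  also have "\<dots> = upper_dst r (dst_vec \<omega>)"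
    using nonneg_r r(1) by (cases "X {Rel r, Dst} 0 \<omega> < eps") (simp_all add: upper_dst_def ennreal_plus)
  also have "\<dots> = of_bool (first_early n g d eps r (sel_vec \<omega>)) * upper_dst r (dst_vec \<omega>)"
    using r(2) by simp
  also have "\<dots> \<le> ?sum"
    by (rule member_le_sum) (use r(1) in auto)
  finally show ?thesis by (rule add_increasing[OF zero_le])
next
  case False
  then show ?thesis
    using delivery_time_le_SD[OF nonneg] by (intro add_increasing2[OF zero_le]) (simp add: ennreal_leI)
qed

lemma lower_le_delivery_time:
  assumes nonneg: "\<forall>e\<in>node_pairs n. \<forall>k. 0 \<le> X e k \<omega>"
  shows "(\<Sum>i<n. of_bool (first_early n g d eps i (sel_vec \<omega>)) * lower_dst i (dst_vec \<omega>))
    \<le> ennreal (delivery_time \<omega>)"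
proof -
  have "of_bool (first_early n g d eps i (sel_vec \<omega>)) * lower_dst i (dst_vec \<omega>)
      \<le> of_bool (first_early n g d eps i (sel_vec \<omega>)) * ennreal (delivery_time \<omega>)" if "i < n" for i
  proof (cases "first_early n g d eps i (sel_vec \<omega>) \<and> eps \<le> X {Rel i, Dst} 0 \<omega>")
    case True
    then have "X {Src, Rel i} 0 \<omega> \<le> X {Rel i, Dst} 0 \<omega>"
      using that by (auto simp: first_early_def early_def)
    then show ?thesis
      using True that delivery_time_first_early[OF nonneg that] by (simp add: lower_dst_def)
  qed (auto simp: lower_dst_def that)
  then have "(\<Sum>i<n. of_bool (first_early n g d eps i (sel_vec \<omega>)) * lower_dst i (dst_vec \<omega>))
      \<le> (\<Sum>i<n. of_bool (first_early n g d eps i (sel_vec \<omega>))) * ennreal (delivery_time \<omega>)"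
    unfolding sum_distrib_right by (intro sum_mono) auto
  also have "\<dots> \<le> ennreal (delivery_time \<omega>)"
    using mult_right_mono[OF sum_first_early_le_1] by simp
  finally show ?thesis .
qed

lemma n_pos: "0 < n"
  using eps_pos eps_le_n by simp

lemma prob_early:
  assumes "i < n"
  shows "prob {\<omega> \<in> space M. early g d eps i (outcome P X \<omega>)} = interest_prob * meet_prob"
proof -
  let ?Z = "\<lambda>j \<omega>. outcome P X \<omega> j" and ?A = "Inr ({Src, Rel i}, 0)"
  have "indep_var borel (?Z (Inl i)) borel (?Z ?A)"
    using assms by (intro indep_var_of_indep_vars[OF indep_outcome]) auto
  moreover have "{x. g \<le> x \<bullet> d} \<in> sets borel" by measurable
  moreover have "{x :: real \<times> (real ^ 'k). fst x \<le> eps} \<in> sets borel"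
    by (intro borel_closed closed_Collect_le continuous_intros)
  ultimately have "\<P>(\<omega> in M. ?Z (Inl i) \<omega> \<in> {x. g \<le> x \<bullet> d} \<and> ?Z ?A \<omega> \<in> {x. fst x \<le> eps})
      = \<P>(\<omega> in M. ?Z (Inl i) \<omega> \<in> {x. g \<le> x \<bullet> d}) * \<P>(\<omega> in M. ?Z ?A \<omega> \<in> {x. fst x \<le> eps})"
    by (rule prob_indep_random_variable)
  moreover have "\<P>(\<omega> in M. ?Z (Inl i) \<omega> \<in> {x. g \<le> x \<bullet> d}) = interest_prob"
  proof -
    have "\<P>(\<omega> in M. ?Z (Inl i) \<omega> \<in> {x. g \<le> x \<bullet> d}) = measure (distr M borel (P i)) {x. g \<le> x \<bullet> d}"
      using P_rv[OF assms] by (subst measure_distr) (auto simp: outcome_def vimage_def Int_def conj_commute)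
    then show ?thesis using P_distr[OF assms] by simp
  qed
  moreover have "\<P>(\<omega> in M. ?Z ?A \<omega> \<in> {x. fst x \<le> eps}) = meet_prob"
    using exponential_distributedD_le[OF X_exp[of "{Src, Rel i}" 0] _ lam_pos, of eps] assms eps_pos
    by (simp add: outcome_def)
  ultimately show ?thesis
    by (simp add: early_def outcome_def profile_at_def first_meet_at_def)
qed

lemma sets_early: "i < n \<Longrightarrow> {\<omega> \<in> space M. early g d eps i (outcome P X \<omega>)} \<in> events"
  using P_rv[of i] by (simp add: early_def) measurable

lemma prob_no_early:
  "prob {\<omega> \<in> space M. \<forall>i<n. \<not> early g d eps i (outcome P X \<omega>)} = (1 - interest_prob * meet_prob) ^ n"
proof -
  let ?V = "\<lambda>i \<omega>. restrict (outcome P X \<omega>) (relay_coords i)"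
  let ?A = "\<lambda>i. {x \<in> space (PiM (relay_coords i) (\<lambda>_. borel)). \<not> early g d eps i x}"
  have indep_relays: "indep_vars (\<lambda>i. PiM (relay_coords i) (\<lambda>_. borel)) ?V {..<n}"
    using indep_vars_restrict[OF indep_outcome, of "{..<n}" relay_coords]
    by (auto simp: relay_coords_def disjoint_family_on_def)
  have V_eq: "?V i -` ?A i \<inter> space M = space M - {\<omega> \<in> space M. early g d eps i (outcome P X \<omega>)}" for i
    by (auto simp: early_restrict space_PiM)
  have "prob (\<Inter>i\<in>{..<n}. ?V i -` ?A i \<inter> space M) = (\<Prod>i<n. prob (?V i -` ?A i \<inter> space M))"
    using n_pos by (intro indep_varsD[OF indep_relays]) auto
  also have "\<dots> = (\<Prod>i<n. 1 - interest_prob * meet_prob)"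
    unfolding V_eq by (intro prod.cong refl) (simp add: prob_compl prob_early sets_early)
  also have "(\<Inter>i\<in>{..<n}. ?V i -` ?A i \<inter> space M) = {\<omega> \<in> space M. \<forall>i<n. \<not> early g d eps i (outcome P X \<omega>)}"
    unfolding V_eq using n_pos by auto
  finally show ?thesis by simp
qed

lemma measurable_sel_vec [measurable]: "sel_vec \<in> measurable M (PiM sel_coords (\<lambda>_. borel))"
  using indep_sel_dst by (rule indep_var_rv1)

lemma measurable_dst_vec [measurable]: "dst_vec \<in> measurable M (PiM dst_coords (\<lambda>_. borel))"
  using indep_sel_dst by (rule indep_var_rv2)

lemma early_sel_vec [simp]: "i < n \<Longrightarrow> early g d eps i (sel_vec \<omega>) \<longleftrightarrow> early g d eps i (outcome P X \<omega>)"
  unfolding sel_vec_def by (rule early_restrict) (auto simp: sel_coords_def)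

lemma sets_no_early: "{\<omega> \<in> space M. \<forall>i<n. \<not> early g d eps i (outcome P X \<omega>)} \<in> events"
proof -
  have "{\<omega> \<in> space M. \<forall>i<n. \<not> early g d eps i (outcome P X \<omega>)}
      = space M - (\<Union>i<n. {\<omega> \<in> space M. early g d eps i (outcome P X \<omega>)})"
    by auto
  then show ?thesis using sets_early by auto
qed

lemma nn_integral_no_early:
  "(\<integral>\<^sup>+\<omega>. of_bool (\<forall>i<n. \<not> early g d eps i (sel_vec \<omega>)) \<partial>M)
    = ennreal ((1 - interest_prob * meet_prob) ^ n)"
proof -
  have "(\<lambda>\<omega>. \<forall>i<n. \<not> early g d eps i (sel_vec \<omega>)) = (\<lambda>\<omega>. \<forall>i<n. \<not> early g d eps i (outcome P X \<omega>))"
    by (intro ext all_cong) simp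
  then have "(\<integral>\<^sup>+\<omega>. of_bool (\<forall>i<n. \<not> early g d eps i (sel_vec \<omega>)) \<partial>M)
      = emeasure M {\<omega> \<in> space M. \<forall>i<n. \<not> early g d eps i (outcome P X \<omega>)}"
    using nn_integral_of_bool[OF sets_no_early] by simp
  also have "\<dots> = ennreal ((1 - interest_prob * meet_prob) ^ n)"
    using emeasure_eq_measure prob_no_early by simp
  finally show ?thesis .
qed

lemma nn_integral_some_early:
  "(\<integral>\<^sup>+\<omega>. of_bool (\<exists>i<n. early g d eps i (sel_vec \<omega>)) \<partial>M)
    = ennreal (1 - (1 - interest_prob * meet_prob) ^ n)"
proof -
  let ?none = "{\<omega> \<in> space M. \<forall>i<n. \<not> early g d eps i (outcome P X \<omega>)}"
  have some: "{\<omega> \<in> space M. \<exists>i<n. early g d eps i (outcome P X \<omega>)} = space M - ?none"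
    by blast
  have "(\<integral>\<^sup>+\<omega>. of_bool (\<exists>i<n. early g d eps i (sel_vec \<omega>)) \<partial>M)
      = (\<integral>\<^sup>+\<omega>. of_bool (\<exists>i<n. early g d eps i (outcome P X \<omega>)) \<partial>M)"
    by (intro nn_integral_cong) (simp cong: conj_cong)
  also have "\<dots> = emeasure M (space M - ?none)"
    unfolding some[symmetric] by (rule nn_integral_of_bool) (simp only: some sets.compl_sets sets_no_early)
  also have "\<dots> = ennreal (1 - (1 - interest_prob * meet_prob) ^ n)"
    by (simp only: emeasure_eq_measure prob_compl[OF sets_no_early] prob_no_early)
  finally show ?thesis .
qed

lemma sum_nn_integral_first_early_le_1:
  "(\<Sum>i<n. \<integral>\<^sup>+\<omega>. of_bool (first_early n g d eps i (sel_vec \<omega>)) \<partial>M) \<le> 1"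
proof -
  have "(\<Sum>i<n. \<integral>\<^sup>+\<omega>. of_bool (first_early n g d eps i (sel_vec \<omega>)) \<partial>M)
      = (\<integral>\<^sup>+\<omega>. (\<Sum>i<n. of_bool (first_early n g d eps i (sel_vec \<omega>))) \<partial>M)"
    by (rule nn_integral_sum[symmetric]) measurable
  also have "\<dots> \<le> (\<integral>\<^sup>+\<omega>. 1 \<partial>M)"
    by (intro nn_integral_mono sum_first_early_le_1)
  finally show ?thesis by (simp add: emeasure_space_1)
qed

lemma sum_nn_integral_first_early_ge:
  "ennreal (1 - (1 - interest_prob * meet_prob) ^ n)
    \<le> (\<Sum>i<n. \<integral>\<^sup>+\<omega>. of_bool (first_early n g d eps i (sel_vec \<omega>)) \<partial>M)"
proof -
  have pointwise: "of_bool (\<exists>i<n. early g d eps i (sel_vec \<omega>))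
      \<le> (\<Sum>i<n. of_bool (first_early n g d eps i (sel_vec \<omega>)) :: ennreal)"
    if "inj_on (\<lambda>i. X {Src, Rel i} 0 \<omega>) {..<n}" for \<omega>
    using that by (intro ex_early_le_sum_first_early) (simp add: inj_on_def)
  have "AE \<omega> in M. of_bool (\<exists>i<n. early g d eps i (sel_vec \<omega>))
      \<le> (\<Sum>i<n. of_bool (first_early n g d eps i (sel_vec \<omega>)) :: ennreal)"
    using AE_distinct_first_meets by eventually_elim (rule pointwise)
  then have "(\<integral>\<^sup>+\<omega>. of_bool (\<exists>i<n. early g d eps i (sel_vec \<omega>)) \<partial>M)
      \<le> (\<integral>\<^sup>+\<omega>. (\<Sum>i<n. of_bool (first_early n g d eps i (sel_vec \<omega>))) \<partial>M)"
    by (rule nn_integral_mono_AE)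
  also have "\<dots> = (\<Sum>i<n. \<integral>\<^sup>+\<omega>. of_bool (first_early n g d eps i (sel_vec \<omega>)) \<partial>M)"
    by (rule nn_integral_sum) measurable
  finally show ?thesis by (simp add: nn_integral_some_early)
qed

lemma meet_prob_nonneg: "0 \<le> meet_prob"
  using eps_pos lam_pos by simp

lemma nn_integral_first_meet_SD:
  "(\<integral>\<^sup>+\<omega>. ennreal (first_meet_at {Src, Dst} (dst_vec \<omega>)) \<partial>M) = ennreal (1 / lam)"
  using nn_integral_exponential[OF lam_pos X_exp[OF node_pairs_SD]] by simp

lemma nn_integral_min_SD_RD:
  assumes "i < n"
  shows "(\<integral>\<^sup>+\<omega>. ennreal (min (X {Src, Dst} 0 \<omega>) (X {Rel i, Dst} 0 \<omega>)) \<partial>M) = ennreal (1 / (2 * lam))"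
proof -
  have "distributed M lborel (\<lambda>\<omega>. min (X {Src, Dst} 0 \<omega>) (X {Rel i, Dst} 0 \<omega>)) (exponential_density (lam + lam))"
    using assms by (intro exponential_distributed_min lam_pos X_exp indep_first_meets) auto
  from nn_integral_exponential[OF _ this] lam_pos show ?thesis by simp
qed

lemma nn_integral_upper_dst:
  assumes "i < n"
  shows "(\<integral>\<^sup>+\<omega>. upper_dst i (dst_vec \<omega>) \<partial>M) \<le> ennreal (1 / (2 * lam) + meet_prob / lam)"
proof -
  let ?E = "X {Src, Dst} 0" and ?Y = "X {Rel i, Dst} 0"
  have "(\<integral>\<^sup>+\<omega>. of_bool (?Y \<omega> < eps) \<partial>M) = emeasure M {\<omega> \<in> space M. ?Y \<omega> < eps}"
    using assms by (intro nn_integral_of_bool) measurable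
  also have "\<dots> \<le> emeasure M {\<omega> \<in> space M. ?Y \<omega> \<le> eps}"
    using assms by (intro emeasure_mono) (auto, measurable)
  also have "\<dots> = ennreal meet_prob"
    using exponential_distributedD_le[OF X_exp[of "{Rel i, Dst}" 0] _ lam_pos, of eps] assms eps_pos
    by (simp add: emeasure_eq_measure)
  finally have Y_early: "(\<integral>\<^sup>+\<omega>. of_bool (?Y \<omega> < eps) \<partial>M) \<le> ennreal meet_prob" .
  have "indep_var borel ?Y borel ?E"
    using assms by (intro indep_first_meets) auto
  then have "(\<integral>\<^sup>+\<omega>. of_bool (?Y \<omega> < eps) * ennreal (?E \<omega>) \<partial>M)
      = (\<integral>\<^sup>+\<omega>. of_bool (?Y \<omega> < eps) \<partial>M) * (\<integral>\<^sup>+\<omega>. ennreal (?E \<omega>) \<partial>M)"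
    by (rule nn_integral_mult_indep_var[where f = "\<lambda>t. of_bool (t < eps)" and h = ennreal]; measurable)
  also have "\<dots> \<le> ennreal meet_prob * ennreal (1 / lam)"
    using Y_early nn_integral_exponential[OF lam_pos X_exp[OF node_pairs_SD]] by (intro mult_mono) auto
  also have "\<dots> = ennreal (meet_prob / lam)"
    using ennreal_mult'[OF meet_prob_nonneg, of "1 / lam"] by simp
  finally have late: "(\<integral>\<^sup>+\<omega>. of_bool (?Y \<omega> < eps) * ennreal (?E \<omega>) \<partial>M) \<le> ennreal (meet_prob / lam)" .
  have "(\<integral>\<^sup>+\<omega>. upper_dst i (dst_vec \<omega>) \<partial>M)
      = (\<integral>\<^sup>+\<omega>. ennreal (min (?E \<omega>) (?Y \<omega>)) \<partial>M) + (\<integral>\<^sup>+\<omega>. of_bool (?Y \<omega> < eps) * ennreal (?E \<omega>) \<partial>M)"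
    unfolding upper_dst_def using assms by (simp only: dst_vec_eval) (rule nn_integral_add; measurable)
  also have "\<dots> \<le> ennreal (1 / (2 * lam)) + ennreal (meet_prob / lam)"
    unfolding nn_integral_min_SD_RD[OF assms] by (rule add_left_mono[OF late])
  also have "\<dots> = ennreal (1 / (2 * lam) + meet_prob / lam)"
    using lam_pos meet_prob_nonneg by (intro ennreal_plus[symmetric]) auto
  finally show ?thesis .
qed

lemma nn_integral_lower_dst:
  assumes "i < n"
  shows "ennreal (1 / (2 * lam) - eps) \<le> (\<integral>\<^sup>+\<omega>. lower_dst i (dst_vec \<omega>) \<partial>M)"
proof -
  have "ennreal (min (X {Src, Dst} 0 \<omega>) (X {Rel i, Dst} 0 \<omega>)) \<le> lower_dst i (dst_vec \<omega>) + ennreal eps" for \<omega>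
  proof (cases "eps \<le> X {Rel i, Dst} 0 \<omega>")
    case True
    then show ?thesis using assms by (simp add: lower_dst_def add_increasing2)
  next
    case False
    then have "ennreal (min (X {Src, Dst} 0 \<omega>) (X {Rel i, Dst} 0 \<omega>)) \<le> ennreal eps"
      by (intro ennreal_leI) linarith
    then show ?thesis by (simp add: add_increasing)
  qed
  then have "ennreal (1 / (2 * lam)) \<le> (\<integral>\<^sup>+\<omega>. lower_dst i (dst_vec \<omega>) + ennreal eps \<partial>M)"
    unfolding nn_integral_min_SD_RD[OF assms, symmetric] by (rule nn_integral_mono)
  also have "\<dots> = (\<integral>\<^sup>+\<omega>. lower_dst i (dst_vec \<omega>) \<partial>M) + (\<integral>\<^sup>+\<omega>. ennreal eps \<partial>M)"
    by (rule nn_integral_add) measurable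
  also have "\<dots> = (\<integral>\<^sup>+\<omega>. lower_dst i (dst_vec \<omega>) \<partial>M) + ennreal eps"
    by (simp add: emeasure_space_1)
  finally have "ennreal (1 / (2 * lam)) - ennreal eps \<le> (\<integral>\<^sup>+\<omega>. lower_dst i (dst_vec \<omega>) \<partial>M)"
    unfolding ennreal_minus_le_iff by (simp add: add.commute)
  then show ?thesis using eps_pos by (simp add: ennreal_minus)
qed

lemma no_early_prob_bounds:
  "0 \<le> 1 - interest_prob * meet_prob" "1 - interest_prob * meet_prob \<le> 1"
proof -
  interpret profile: prob_space "profile_distr :: (real \<times> (real ^ 'k)) measure"
    by (rule prob_space_profile_distr)
  have "interest_prob * meet_prob \<le> 1 * 1"
    using eps_pos lam_pos by (intro mult_mono) auto
  then show "0 \<le> 1 - interest_prob * meet_prob" by simp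
  show "1 - interest_prob * meet_prob \<le> 1"
    using meet_prob_nonneg by simp
qed

lemma nn_integral_delivery_time_le:
  "(\<integral>\<^sup>+\<omega>. ennreal (delivery_time \<omega>) \<partial>M)
    \<le> ennreal ((1 - interest_prob * meet_prob) ^ n / lam + (1 / (2 * lam) + meet_prob / lam))"
proof -
  let ?q = "(1 - interest_prob * meet_prob) ^ n" and ?B = "1 / (2 * lam) + meet_prob / lam"
  let ?none = "\<lambda>x. of_bool (\<forall>j<n. \<not> early g d eps j x) :: ennreal"
  let ?E = "\<lambda>y. ennreal (first_meet_at {Src, Dst} y)"
  let ?fe = "\<lambda>i x. of_bool (first_early n g d eps i x) :: ennreal"
  have split_none: "(\<integral>\<^sup>+\<omega>. ?none (sel_vec \<omega>) * ?E (dst_vec \<omega>) \<partial>M)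
      = (\<integral>\<^sup>+\<omega>. ?none (sel_vec \<omega>) \<partial>M) * (\<integral>\<^sup>+\<omega>. ?E (dst_vec \<omega>) \<partial>M)"
    by (rule nn_integral_mult_indep_var[OF indep_sel_dst]; measurable)
  have split_upper: "(\<integral>\<^sup>+\<omega>. ?fe i (sel_vec \<omega>) * upper_dst i (dst_vec \<omega>) \<partial>M)
      = (\<integral>\<^sup>+\<omega>. ?fe i (sel_vec \<omega>) \<partial>M) * (\<integral>\<^sup>+\<omega>. upper_dst i (dst_vec \<omega>) \<partial>M)" for i
    by (rule nn_integral_mult_indep_var[OF indep_sel_dst]; measurable)
  have "AE \<omega> in M. ennreal (delivery_time \<omega>)
      \<le> ?none (sel_vec \<omega>) * ?E (dst_vec \<omega>) + (\<Sum>i<n. ?fe i (sel_vec \<omega>) * upper_dst i (dst_vec \<omega>))"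
    using AE_meet_times_nonneg AE_distinct_first_meets by eventually_elim (rule delivery_time_le_upper)
  then have "(\<integral>\<^sup>+\<omega>. ennreal (delivery_time \<omega>) \<partial>M)
      \<le> (\<integral>\<^sup>+\<omega>. ?none (sel_vec \<omega>) * ?E (dst_vec \<omega>)
            + (\<Sum>i<n. ?fe i (sel_vec \<omega>) * upper_dst i (dst_vec \<omega>)) \<partial>M)"
    by (rule nn_integral_mono_AE)
  also have "\<dots> = (\<integral>\<^sup>+\<omega>. ?none (sel_vec \<omega>) * ?E (dst_vec \<omega>) \<partial>M)
      + (\<Sum>i<n. \<integral>\<^sup>+\<omega>. ?fe i (sel_vec \<omega>) * upper_dst i (dst_vec \<omega>) \<partial>M)"
    by (subst nn_integral_sum[symmetric]; measurable?) (rule nn_integral_add; measurable)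
  also have "\<dots> = (\<integral>\<^sup>+\<omega>. ?none (sel_vec \<omega>) \<partial>M) * (\<integral>\<^sup>+\<omega>. ?E (dst_vec \<omega>) \<partial>M)
      + (\<Sum>i<n. (\<integral>\<^sup>+\<omega>. ?fe i (sel_vec \<omega>) \<partial>M) * (\<integral>\<^sup>+\<omega>. upper_dst i (dst_vec \<omega>) \<partial>M))"
    by (simp only: split_none split_upper)
  also have "\<dots> \<le> ennreal ?q * ennreal (1 / lam) + (\<Sum>i<n. (\<integral>\<^sup>+\<omega>. ?fe i (sel_vec \<omega>) \<partial>M) * ennreal ?B)"
    by (intro add_mono sum_mono mult_left_mono nn_integral_upper_dst)
       (simp_all only: nn_integral_no_early nn_integral_first_meet_SD order_refl lessThan_iff zero_le)
  also have "\<dots> \<le> ennreal ?q * ennreal (1 / lam) + 1 * ennreal ?B"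
    unfolding sum_distrib_right[symmetric] by (intro add_left_mono mult_right_mono sum_nn_integral_first_early_le_1) simp
  also have "\<dots> = ennreal (?q / lam + ?B)"
    using no_early_prob_bounds meet_prob_nonneg lam_pos by (simp add: ennreal_mult'[symmetric] ennreal_plus)
  finally show ?thesis .
qed

lemma nn_integral_delivery_time_ge:
  "ennreal ((1 - (1 - interest_prob * meet_prob) ^ n) * (1 / (2 * lam) - eps))
    \<le> (\<integral>\<^sup>+\<omega>. ennreal (delivery_time \<omega>) \<partial>M)"
proof -
  let ?q = "(1 - interest_prob * meet_prob) ^ n" and ?B = "1 / (2 * lam) - eps"
  let ?fe = "\<lambda>i x. of_bool (first_early n g d eps i x) :: ennreal"
  have split_lower: "(\<integral>\<^sup>+\<omega>. ?fe i (sel_vec \<omega>) * lower_dst i (dst_vec \<omega>) \<partial>M)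
      = (\<integral>\<^sup>+\<omega>. ?fe i (sel_vec \<omega>) \<partial>M) * (\<integral>\<^sup>+\<omega>. lower_dst i (dst_vec \<omega>) \<partial>M)" for i
    by (rule nn_integral_mult_indep_var[OF indep_sel_dst]; measurable)
  have "AE \<omega> in M. (\<Sum>i<n. ?fe i (sel_vec \<omega>) * lower_dst i (dst_vec \<omega>)) \<le> ennreal (delivery_time \<omega>)"
    using AE_meet_times_nonneg by eventually_elim (rule lower_le_delivery_time)
  then have lower: "(\<integral>\<^sup>+\<omega>. (\<Sum>i<n. ?fe i (sel_vec \<omega>) * lower_dst i (dst_vec \<omega>)) \<partial>M)
      \<le> (\<integral>\<^sup>+\<omega>. ennreal (delivery_time \<omega>) \<partial>M)"
    by (rule nn_integral_mono_AE)
  have "0 \<le> 1 - ?q"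
    using no_early_prob_bounds by (simp add: power_le_one)
  then have "ennreal ((1 - ?q) * ?B) = ennreal (1 - ?q) * ennreal ?B"
    by (rule ennreal_mult')
  also have "\<dots> \<le> (\<Sum>i<n. \<integral>\<^sup>+\<omega>. ?fe i (sel_vec \<omega>) \<partial>M) * ennreal ?B"
    by (intro mult_right_mono sum_nn_integral_first_early_ge) simp
  also have "\<dots> \<le> (\<Sum>i<n. (\<integral>\<^sup>+\<omega>. ?fe i (sel_vec \<omega>) \<partial>M) * (\<integral>\<^sup>+\<omega>. lower_dst i (dst_vec \<omega>) \<partial>M))"
    unfolding sum_distrib_right
    by (intro sum_mono mult_left_mono nn_integral_lower_dst) (simp_all only: lessThan_iff zero_le)
  also have "\<dots> = (\<integral>\<^sup>+\<omega>. (\<Sum>i<n. ?fe i (sel_vec \<omega>) * lower_dst i (dst_vec \<omega>)) \<partial>M)"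
    unfolding split_lower[symmetric] by (rule nn_integral_sum[symmetric]; measurable)
  finally show ?thesis using lower by (rule order_trans)
qed

lemma delivery_time_bound:
  "\<bar>2 * lam * enn2real (\<integral>\<^sup>+\<omega>. ennreal (delivery_time \<omega>) \<partial>M) - 1\<bar>
    \<le> 2 * (1 - interest_prob * meet_prob) ^ n + 2 * lam * eps"
proof -
  let ?q = "(1 - interest_prob * meet_prob) ^ n" and ?I = "\<integral>\<^sup>+\<omega>. ennreal (delivery_time \<omega>) \<partial>M"
  have q: "0 \<le> ?q" "?q \<le> 1"
    using no_early_prob_bounds by (simp_all add: power_le_one)
  have meet_prob_le: "meet_prob \<le> lam * eps"
    using exp_ge_add_one_self[of "- eps * lam"] by (simp add: algebra_simps)
  have upper_nonneg: "0 \<le> ?q / lam + (1 / (2 * lam) + meet_prob / lam)"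
    using q meet_prob_nonneg lam_pos by simp
  then have I_finite: "?I < top"
    using nn_integral_delivery_time_le by (simp add: order_le_less_trans)
  have "enn2real ?I \<le> ?q / lam + (1 / (2 * lam) + meet_prob / lam)"
    using enn2real_mono[OF nn_integral_delivery_time_le] upper_nonneg by simp
  then have "2 * lam * enn2real ?I \<le> 2 * lam * (?q / lam + (1 / (2 * lam) + meet_prob / lam))"
    using lam_pos by (intro mult_left_mono) auto
  also have "\<dots> = 2 * ?q + 1 + 2 * meet_prob"
    using lam_pos by (simp add: field_simps)
  finally have up: "2 * lam * enn2real ?I \<le> 2 * ?q + 1 + 2 * meet_prob" .
  have I_lower: "(1 - ?q) * (1 / (2 * lam) - eps) \<le> enn2real ?I"
  proof (cases "0 \<le> (1 - ?q) * (1 / (2 * lam) - eps)")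
    case True
    then show ?thesis using enn2real_mono[OF nn_integral_delivery_time_ge I_finite] by simp
  qed (simp add: enn2real_nonneg order_trans[of _ 0])
  have "(1 - ?q) * (1 - 2 * lam * eps) = 2 * lam * ((1 - ?q) * (1 / (2 * lam) - eps))"
    using lam_pos by (simp add: field_simps)
  also have "\<dots> \<le> 2 * lam * enn2real ?I"
    using I_lower lam_pos by (intro mult_left_mono) auto
  finally have lo: "(1 - ?q) * (1 - 2 * lam * eps) \<le> 2 * lam * enn2real ?I" .
  have "0 \<le> ?q * (2 * lam * eps)"
    using q lam_pos eps_pos by simp
  then show ?thesis
    using up lo meet_prob_le q by (simp add: abs_le_iff algebra_simps)
qed

end


section \<open>The limit\<close>

lemma tendsto_of_geometric_bounds:
  fixes f :: "nat \<Rightarrow> real"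
  assumes "\<And>eps. 0 < eps \<Longrightarrow> eps \<le> 1 \<Longrightarrow>
    \<exists>q. 0 \<le> q \<and> q < 1 \<and> (\<forall>n\<ge>1. \<bar>f n - L\<bar> \<le> C * q ^ n + K * eps)"
  shows "f \<longlonglongrightarrow> L"
proof (rule LIMSEQ_I)
  fix r :: real assume "0 < r"
  define c where "c = \<bar>K\<bar> + 1"
  define eps where "eps = min 1 (r / (2 * c))"
  have "0 < c" by (simp add: c_def add_nonneg_pos)
  then have eps: "0 < eps" "eps \<le> 1"
    using \<open>0 < r\<close> by (auto simp: eps_def)
  have "K * eps \<le> c * (r / (2 * c))"
    using eps by (intro mult_mono) (auto simp: eps_def c_def)
  also have "\<dots> = r / 2"
    using \<open>0 < c\<close> by simp
  finally have K_eps: "K * eps \<le> r / 2" .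
  obtain q where q: "0 \<le> q" "q < 1" and bound: "\<And>n. 1 \<le> n \<Longrightarrow> \<bar>f n - L\<bar> \<le> C * q ^ n + K * eps"
    using assms[OF eps] by auto
  have "(\<lambda>n. C * q ^ n) \<longlonglongrightarrow> 0"
    using q by (intro tendsto_mult_right_zero LIMSEQ_power_zero) auto
  then have "\<forall>\<^sub>F n in sequentially. C * q ^ n < r / 2"
    using \<open>0 < r\<close> by (intro order_tendstoD) auto
  moreover have "\<forall>\<^sub>F n in sequentially. 1 \<le> n"
    by (rule eventually_ge_at_top)
  ultimately have "\<forall>\<^sub>F n in sequentially. norm (f n - L) < r"
    by eventually_elim (use bound K_eps in fastforce)
  then show "\<exists>no. \<forall>n\<ge>no. norm (f n - L) < r"
    by (simp add: eventually_sequentially)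
qed

theorem proposition2:
  fixes M :: "nat \<Rightarrow> 'w measure"
    and Prof :: "nat \<Rightarrow> nat \<Rightarrow> 'w \<Rightarrow> real \<times> (real ^ 'k)"
    and X :: "nat \<Rightarrow> node set \<Rightarrow> nat \<Rightarrow> 'w \<Rightarrow> real"
    and lam :: real and j1 :: 'k
  assumes lam_pos: "0 < lam"
    and prob: "\<And>n. prob_space (M n)"
    and prof_distr: "\<And>n i. i < n \<Longrightarrow> distr (M n) borel (Prof n i) = profile_distr"
    and prof_rv: "\<And>n i. i < n \<Longrightarrow> Prof n i \<in> borel_measurable (M n)"
    and meet_exp: "\<And>n e k. e \<in> node_pairs n \<Longrightarrow>
                     distributed (M n) lborel (X n e k) (exponential_density lam)"
    and indep: "\<And>n. prob_space.indep_sets (M n)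
                  (case_sum (\<lambda>i. rv_events (M n) borel (Prof n i))
                            (\<lambda>(e, k). rv_events (M n) borel (X n e k)))
                  (Inl ` {..<n} \<union> Inr ` (node_pairs n \<times> UNIV))"
  shows "(\<lambda>n. 2 * lam * enn2real (\<integral>\<^sup>+ \<omega>. ennreal
            (deliv_time n ((29/100) / real CARD('k)) (\<lambda>i. Prof n i \<omega>) (D_prof j1)
               (\<lambda>e. meet_times (\<lambda>k. X n e k \<omega>))) \<partial>M n)) \<longlonglongrightarrow> 1"
proof -
  let ?g = "(29/100) / real CARD('k)"
  let ?p = "measure (profile_distr :: (real \<times> (real ^ 'k)) measure) {x. ?g \<le> x \<bullet> D_prof j1}"
  define F where "F n = 2 * lam * enn2real (\<integral>\<^sup>+ \<omega>. ennreal (deliv_time n ?g (\<lambda>i. Prof n i \<omega>) (D_prof j1)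
    (\<lambda>e. meet_times (\<lambda>k. X n e k \<omega>))) \<partial>M n)" for n
  have "1 \<le> real CARD('k)" by simp
  then have "29 \<le> real CARD('k) * 45" by linarith
  then have "0 < ?p"
    by (intro measure_profile_distr_interest) (simp add: field_simps)
  have bound: "\<bar>F n - 1\<bar> \<le> 2 * (1 - ?p * (1 - exp (- eps * lam))) ^ n + 2 * lam * eps"
    if "0 < eps" "eps \<le> real n" for n eps
  proof -
    interpret ib_network "M n" n lam "Prof n" "X n" ?g "D_prof j1" eps
      using prob lam_pos prof_distr prof_rv meet_exp indep that
      by (rule ib_network.intro[OF _ ib_network_axioms.intro])
    show ?thesis using delivery_time_bound unfolding F_def delivery_time_def .
  qed
  have "F \<longlonglongrightarrow> 1"
  proof (rule tendsto_of_geometric_bounds)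
    fix eps :: real assume eps: "0 < eps" "eps \<le> 1"
    have "?p \<le> 1" by (rule prob_space.prob_le_1[OF prob_space_profile_distr])
    moreover have "0 < 1 - exp (- eps * lam)" "1 - exp (- eps * lam) \<le> 1"
      using eps lam_pos by auto
    ultimately have "0 \<le> 1 - ?p * (1 - exp (- eps * lam))" "1 - ?p * (1 - exp (- eps * lam)) < 1"
      using \<open>0 < ?p\<close> mult_le_one[of ?p "1 - exp (- eps * lam)"] by auto
    then show "\<exists>q. 0 \<le> q \<and> q < 1 \<and> (\<forall>n\<ge>1. \<bar>F n - 1\<bar> \<le> 2 * q ^ n + 2 * lam * eps)"
      using bound eps by (intro exI[of _ "1 - ?p * (1 - exp (- eps * lam))"]) force
  qed
  then show ?thesis unfolding F_def[abs_def] .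
qed

end
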